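(* Let $\sigma$ be an implicit signature and $\mathsf V$ a pseudovariety of finite semigroups. If $\mathsf V$ is $\sigma$-PR then $\mathsf V$ is $\sigma$-full; and if $\mathsf V$ is strongly $\sigma$-PR then $\mathsf V$ is strongly $\sigma$-full.
   Context: $\overline{\Omega}_X\mathsf V$ is the free pro-$\mathsf V$ semigroup on a finite alphabet $X$; $\Omega^\sigma_X\mathsf V$ is its subalgebra generated by $X$ under the operations of $\sigma$ (an implicit signature: a set of implicit operations of finite arity containing multiplication), with the induced topology; $\mathsf S$ is the pseudovariety of all finite semigroups and $p_{\mathsf V}:\overline{\Omega}_X\mathsf S\to\overline{\Omega}_X\mathsf V$ the natural continuous homomorphism. The Pin-Reutenauer procedure holds for a class $\mathcal C$ of subsets of $\Omega^\sigma_X\mathsf V$ if for all $K,L\in\mathcal C$, with closures in $\Omega^\sigma_X\mathsf V$, $\overline{KL}=\overline K\,\overline L$ and $\overline{L^+}=\langle\overline L\rangle_\sigma$ (the $\sigma$-subalgebra generated by $\overline L$). $\mathsf V$ is $\sigma$-PR if for every finite $X$ this holds for the class of all sets $p_{\mathsf V}(L)$ with $L\subseteq X^+$ rational, and strongly $\sigma$-PR if for every finite $X$ it holds for the class of all rational subsets of $\Omega^\sigma_X\mathsf V$. $\mathsf V$ is full with respect to a class $\mathcal C$ of subsets of $\Omega^\sigma_X\mathsf S$ if $p_{\mathsf V}(\overline L)=\overline{p_{\mathsf V}(L)}$ for all $L\in\mathcal C$ (left closure in $\Omega^\sigma_X\mathsf S$, right closure in $\Omega^\sigma_X\mathsf V$);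 $\mathsf V$ is $\sigma$-full if for every finite $X$ it is full with respect to the set of rational languages of $X^+$, and strongly $\sigma$-full if for every finite $X$ it is full with respect to all rational subsets of $\Omega^\sigma_X\mathsf S$. *)

theory Defs
  imports Main "HOL-Library.FuncSet"
begin

type_synonym sgr = "nat set \<times> (nat \<Rightarrow> nat \<Rightarrow> nat)"

abbreviation car :: "sgr \<Rightarrow> nat set" where "car S \<equiv> fst S"
abbreviation mul :: "sgr \<Rightarrow> nat \<Rightarrow> nat \<Rightarrow> nat" where "mul S \<equiv> snd S"

text \<open>The pseudovariety S of all finite (nonempty) semigroups; every finite semigroup is
 isomorphic to one of these.\<close>
definition Sall :: "sgr set" where
  "Sall = {S. finite (car S) \<and> car S \<noteq> {}
             \<and> (\<forall>a\<in>car S. \<forall>b\<in>car S. mul S a b \<in> car S)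
             \<and> (\<forall>a\<in>car S. \<forall>b\<in>car S. \<forall>c\<in>car S. mul S (mul S a b) c = mul S a (mul S b c))}"

definition shom :: "sgr \<Rightarrow> sgr \<Rightarrow> (nat \<Rightarrow> nat) \<Rightarrow> bool" where
  "shom S T h \<longleftrightarrow> (\<forall>a\<in>car S. h a \<in> car T) \<and>
     (\<forall>a\<in>car S. \<forall>b\<in>car S. h (mul S a b) = mul T (h a) (h b))"

definition pseudovariety :: "sgr set \<Rightarrow> bool" where
  "pseudovariety V \<longleftrightarrow> V \<subseteq> Sall
   \<and> (\<forall>T\<in>Sall. card (car T) = 1 \<longrightarrow> T \<in> V)
   \<and> (\<forall>S\<in>V. \<forall>T\<in>Sall. car T \<subseteq> car S \<and> (\<forall>a\<in>car T. \<forall>b\<in>car T. mul T a b = mul S a b) \<longrightarrow> T \<in> V)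
   \<and> (\<forall>S\<in>V. \<forall>T\<in>Sall. \<forall>h. shom S T h \<and> h ` car S = car T \<longrightarrow> T \<in> V)
   \<and> (\<forall>S1\<in>V. \<forall>S2\<in>V. \<forall>T\<in>Sall. \<forall>f.
        bij_betw f (car T) (car S1 \<times> car S2) \<and>
        (\<forall>a\<in>car T. \<forall>b\<in>car T. f (mul T a b) =
            (mul S1 (fst (f a)) (fst (f b)), mul S2 (snd (f a)) (snd (f b)))) \<longrightarrow> T \<in> V)"

text \<open>An A-ary implicit operation on V: a family (S,phi) |-> w S phi, for S in V and
 phi : A -> S, commuting with all homomorphisms between members of V.\<close>
type_synonym elt = "sgr \<Rightarrow> (nat \<Rightarrow> nat) \<Rightarrow> nat"

definition impl_op :: "sgr set \<Rightarrow> nat set \<Rightarrow> elt \<Rightarrow> bool" where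
  "impl_op V A w \<longleftrightarrow>
     (\<forall>S \<phi>. \<not> (S \<in> V \<and> \<phi> \<in> A \<rightarrow>\<^sub>E car S) \<longrightarrow> w S \<phi> = undefined)
   \<and> (\<forall>S\<in>V. \<forall>\<phi>\<in>A \<rightarrow>\<^sub>E car S. w S \<phi> \<in> car S)
   \<and> (\<forall>S\<in>V. \<forall>T\<in>V. \<forall>h. shom S T h \<longrightarrow>
        (\<forall>\<phi>\<in>A \<rightarrow>\<^sub>E car S. h (w S \<phi>) = w T (restrict (h \<circ> \<phi>) A)))"

text \<open>The free pro-V semigroup on X, realised as the X-ary implicit operations on V.\<close>
definition Omega_bar :: "sgr set \<Rightarrow> nat set \<Rightarrow> elt set" where
  "Omega_bar V X = {w. impl_op V X w}"

definition dom_pts :: "sgr set \<Rightarrow> nat set \<Rightarrow> (sgr \<times> (nat \<Rightarrow> nat)) set" where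
  "dom_pts V X = {(S, \<phi>). S \<in> V \<and> \<phi> \<in> X \<rightarrow>\<^sub>E car S}"

definition gen :: "sgr set \<Rightarrow> nat set \<Rightarrow> nat \<Rightarrow> elt" where
  "gen V X x = (\<lambda>S \<phi>. if (S, \<phi>) \<in> dom_pts V X then \<phi> x else undefined)"

definition emult :: "sgr set \<Rightarrow> nat set \<Rightarrow> elt \<Rightarrow> elt \<Rightarrow> elt" where
  "emult V X u v = (\<lambda>S \<phi>. if (S, \<phi>) \<in> dom_pts V X then mul S (u S \<phi>) (v S \<phi>) else undefined)"

definition apply_op :: "sgr set \<Rightarrow> nat set \<Rightarrow> nat \<Rightarrow> elt \<Rightarrow> (nat \<Rightarrow> elt) \<Rightarrow> elt" where
  "apply_op V X n w us = (\<lambda>S \<phi>. if (S, \<phi>) \<in> dom_pts V X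
        then w S (\<lambda>i\<in>{..<n}. us i S \<phi>) else undefined)"

definition mult_op :: elt where
  "mult_op = (\<lambda>S \<phi>. if S \<in> Sall \<and> \<phi> \<in> {..<2::nat} \<rightarrow>\<^sub>E car S then mul S (\<phi> 0) (\<phi> 1) else undefined)"

definition implicit_signature :: "(nat \<times> elt) set \<Rightarrow> bool" where
  "implicit_signature \<sigma> \<longleftrightarrow> (\<forall>(n, w)\<in>\<sigma>. impl_op Sall {..<n} w) \<and> (2, mult_op) \<in> \<sigma>"

inductive_set sig_gen :: "sgr set \<Rightarrow> nat set \<Rightarrow> (nat \<times> elt) set \<Rightarrow> elt set \<Rightarrow> elt set"
  for V X \<sigma> G where
  base: "u \<in> G \<Longrightarrow> u \<in> sig_gen V X \<sigma> G"
| op: "(n, w) \<in> \<sigma> \<Longrightarrow> (\<forall>i<n. us i \<in> sig_gen V X \<sigma> G) \<Longrightarrow> apply_op V X n w us \<in> sig_gen V X \<sigma> G"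

definition Omega_sig :: "(nat \<times> elt) set \<Rightarrow> sgr set \<Rightarrow> nat set \<Rightarrow> elt set" where
  "Omega_sig \<sigma> V X = sig_gen V X \<sigma> (gen V X ` X)"

text \<open>Closure in Omega_bar V X (pointwise / profinite topology), and in Omega_sig.\<close>
definition pcl :: "sgr set \<Rightarrow> nat set \<Rightarrow> elt set \<Rightarrow> elt set" where
  "pcl V X L = {w \<in> Omega_bar V X. \<forall>F. finite F \<and> F \<subseteq> dom_pts V X \<longrightarrow>
                   (\<exists>u\<in>L. \<forall>(S, \<phi>)\<in>F. u S \<phi> = w S \<phi>)}"

definition scl :: "(nat \<times> elt) set \<Rightarrow> sgr set \<Rightarrow> nat set \<Rightarrow> elt set \<Rightarrow> elt set" where
  "scl \<sigma> V X L = pcl V X L \<inter> Omega_sig \<sigma> V X"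

definition pV :: "sgr set \<Rightarrow> elt \<Rightarrow> elt" where
  "pV V w = (\<lambda>S \<phi>. if S \<in> V then w S \<phi> else undefined)"

definition setmul :: "('m \<Rightarrow> 'm \<Rightarrow> 'm) \<Rightarrow> 'm set \<Rightarrow> 'm set \<Rightarrow> 'm set" where
  "setmul m K L = {m a b | a b. a \<in> K \<and> b \<in> L}"

inductive_set splus :: "('m \<Rightarrow> 'm \<Rightarrow> 'm) \<Rightarrow> 'm set \<Rightarrow> 'm set" for m K where
  base: "a \<in> K \<Longrightarrow> a \<in> splus m K"
| step: "a \<in> splus m K \<Longrightarrow> b \<in> splus m K \<Longrightarrow> m a b \<in> splus m K"

inductive_set rat_sets :: "'m set \<Rightarrow> ('m \<Rightarrow> 'm \<Rightarrow> 'm) \<Rightarrow> 'm set set" for M m where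
  fin: "finite K \<Longrightarrow> K \<subseteq> M \<Longrightarrow> K \<in> rat_sets M m"
| un: "K \<in> rat_sets M m \<Longrightarrow> L \<in> rat_sets M m \<Longrightarrow> K \<union> L \<in> rat_sets M m"
| prod: "K \<in> rat_sets M m \<Longrightarrow> L \<in> rat_sets M m \<Longrightarrow> setmul m K L \<in> rat_sets M m"
| plus: "K \<in> rat_sets M m \<Longrightarrow> splus m K \<in> rat_sets M m"

definition rat_langs :: "nat set \<Rightarrow> nat list set set" where
  "rat_langs X = rat_sets {xs. xs \<noteq> [] \<and> set xs \<subseteq> X} (@)"

fun word_elt :: "sgr set \<Rightarrow> nat set \<Rightarrow> nat list \<Rightarrow> elt" where
  "word_elt V X [] = undefined"
| "word_elt V X [x] = gen V X x"
| "word_elt V X (x # y # ys) = emult V X (gen V X x) (word_elt V X (y # ys))"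

definition PR_class :: "(nat \<times> elt) set \<Rightarrow> sgr set \<Rightarrow> nat set \<Rightarrow> elt set set \<Rightarrow> bool" where
  "PR_class \<sigma> V X C \<longleftrightarrow> (\<forall>K\<in>C. \<forall>L\<in>C.
      scl \<sigma> V X (setmul (emult V X) K L) = setmul (emult V X) (scl \<sigma> V X K) (scl \<sigma> V X L)
    \<and> scl \<sigma> V X (splus (emult V X) L) = sig_gen V X \<sigma> (scl \<sigma> V X L))"

definition sigma_PR :: "(nat \<times> elt) set \<Rightarrow> sgr set \<Rightarrow> bool" where
  "sigma_PR \<sigma> V \<longleftrightarrow> (\<forall>X. finite X \<longrightarrow>
     PR_class \<sigma> V X {pV V ` (word_elt Sall X ` L) | L. L \<in> rat_langs X})"

definition strongly_sigma_PR :: "(nat \<times> elt) set \<Rightarrow> sgr set \<Rightarrow> bool" where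
  "strongly_sigma_PR \<sigma> V \<longleftrightarrow> (\<forall>X. finite X \<longrightarrow>
     PR_class \<sigma> V X (rat_sets (Omega_sig \<sigma> V X) (emult V X)))"

definition full_wrt :: "(nat \<times> elt) set \<Rightarrow> sgr set \<Rightarrow> nat set \<Rightarrow> elt set set \<Rightarrow> bool" where
  "full_wrt \<sigma> V X C \<longleftrightarrow> (\<forall>L\<in>C. pV V ` scl \<sigma> Sall X L = scl \<sigma> V X (pV V ` L))"

definition sigma_full :: "(nat \<times> elt) set \<Rightarrow> sgr set \<Rightarrow> bool" where
  "sigma_full \<sigma> V \<longleftrightarrow> (\<forall>X. finite X \<longrightarrow>
     full_wrt \<sigma> V X {word_elt Sall X ` L | L. L \<in> rat_langs X})"

definition strongly_sigma_full :: "(nat \<times> elt) set \<Rightarrow> sgr set \<Rightarrow> bool" where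
  "strongly_sigma_full \<sigma> V \<longleftrightarrow> (\<forall>X. finite X \<longrightarrow>
     full_wrt \<sigma> V X (rat_sets (Omega_sig \<sigma> Sall X) (emult Sall X)))"

end

theory Submission
  imports Defs
begin

text \<open>The inclusion \<open>p\<^sub>V(cl L) \<subseteq> cl(p\<^sub>V L)\<close> holds for every \<open>L\<close> by continuity of \<open>p\<^sub>V\<close>.
  The converse is proved by induction on a rational expression for \<open>L\<close>. Finite sets are
  closed and closure commutes with finite unions. For products and iterations, the
  Pin-Reutenauer property of \<open>V\<close> rewrites the closure of \<open>p\<^sub>V(K L)\<close> as a product of
  closures and the closure of \<open>p\<^sub>V(L\<^sup>+)\<close> as the \<open>\<sigma>\<close>-subalgebra generated by a closure,
  and the elements of those lift along \<open>p\<^sub>V\<close>. What remains is that in the free profinite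
  semigroup the closure of a subsemigroup is closed under every implicit operation: in a
  finite semigroup an implicit operation takes values in the subsemigroup generated by its
  arguments, and finitely many points of evaluation can be replaced by their product.\<close>

lemma pseudovariety_subset_Sall: "pseudovariety V \<Longrightarrow> V \<subseteq> Sall"
  by (simp add: pseudovariety_def)

lemma Sall_mul_closed: "S \<in> Sall \<Longrightarrow> a \<in> car S \<Longrightarrow> b \<in> car S \<Longrightarrow> mul S a b \<in> car S"
  unfolding Sall_def by blast

lemma Sall_mul_assoc:
  "S \<in> Sall \<Longrightarrow> a \<in> car S \<Longrightarrow> b \<in> car S \<Longrightarrow> c \<in> car S \<Longrightarrow>
   mul S (mul S a b) c = mul S a (mul S b c)"
  unfolding Sall_def by blast

lemma impl_opI:
  assumes "\<And>S \<phi>. \<not> (S \<in> V \<and> \<phi> \<in> A \<rightarrow>\<^sub>E car S) \<Longrightarrow> w S \<phi> = undefined"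
    and "\<And>S \<phi>. S \<in> V \<Longrightarrow> \<phi> \<in> A \<rightarrow>\<^sub>E car S \<Longrightarrow> w S \<phi> \<in> car S"
    and "\<And>S T h \<phi>. S \<in> V \<Longrightarrow> T \<in> V \<Longrightarrow> shom S T h \<Longrightarrow> \<phi> \<in> A \<rightarrow>\<^sub>E car S \<Longrightarrow>
           h (w S \<phi>) = w T (restrict (h \<circ> \<phi>) A)"
  shows "impl_op V A w"
  using assms unfolding impl_op_def by blast

lemma impl_opD:
  assumes "impl_op V A w"
  shows impl_op_undefined: "\<not> (S \<in> V \<and> \<phi> \<in> A \<rightarrow>\<^sub>E car S) \<Longrightarrow> w S \<phi> = undefined"
    and impl_op_closed: "S \<in> V \<Longrightarrow> \<phi> \<in> A \<rightarrow>\<^sub>E car S \<Longrightarrow> w S \<phi> \<in> car S"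
    and impl_op_hom: "S \<in> V \<Longrightarrow> T \<in> V \<Longrightarrow> shom S T h \<Longrightarrow> \<phi> \<in> A \<rightarrow>\<^sub>E car S \<Longrightarrow>
           h (w S \<phi>) = w T (restrict (h \<circ> \<phi>) A)"
  using assms unfolding impl_op_def by blast+

lemma shom_restrict_PiE: "shom S T h \<Longrightarrow> \<phi> \<in> A \<rightarrow>\<^sub>E car S \<Longrightarrow> restrict (h \<circ> \<phi>) A \<in> A \<rightarrow>\<^sub>E car T"
  unfolding shom_def by auto

lemma Omega_bar_closed: "u \<in> Omega_bar V X \<Longrightarrow> (S, \<phi>) \<in> dom_pts V X \<Longrightarrow> u S \<phi> \<in> car S"
  unfolding Omega_bar_def dom_pts_def using impl_op_closed[of V X u S \<phi>] by blast

lemma Omega_bar_eqI: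
  assumes "u \<in> Omega_bar V X" "v \<in> Omega_bar V X"
    and "\<And>S \<phi>. (S, \<phi>) \<in> dom_pts V X \<Longrightarrow> u S \<phi> = v S \<phi>"
  shows "u = v"
proof (intro ext)
  fix S \<phi>
  show "u S \<phi> = v S \<phi>"
  proof (cases "(S, \<phi>) \<in> dom_pts V X")
    case False
    then have "\<not> (S \<in> V \<and> \<phi> \<in> X \<rightarrow>\<^sub>E car S)" by (simp add: dom_pts_def)
    with assms(1,2) show ?thesis unfolding Omega_bar_def by (simp add: impl_op_undefined)
  qed (rule assms(3))
qed

lemma gen_in_Omega_bar:
  assumes "x \<in> X"
  shows "gen V X x \<in> Omega_bar V X"
  unfolding Omega_bar_def
proof (intro CollectI impl_opI)
  fix S T h \<phi> assume "S \<in> V" "T \<in> V" "shom S T h" "\<phi> \<in> X \<rightarrow>\<^sub>E car S"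
  then show "h (gen V X x S \<phi>) = gen V X x T (restrict (h \<circ> \<phi>) X)"
    using assms shom_restrict_PiE[of S T h \<phi> X] by (simp add: gen_def dom_pts_def)
qed (use assms in \<open>auto simp: gen_def dom_pts_def\<close>)

lemma apply_op_in_Omega_bar:
  assumes V: "V \<subseteq> Sall" and w: "impl_op Sall {..<n} w"
    and us: "\<And>i. i < n \<Longrightarrow> us i \<in> Omega_bar V X"
  shows "apply_op V X n w us \<in> Omega_bar V X"
  unfolding Omega_bar_def
proof (intro CollectI impl_opI)
  have args: "(\<lambda>i\<in>{..<n}. us i S \<phi>) \<in> {..<n} \<rightarrow>\<^sub>E car S"
    if "(S, \<phi>) \<in> dom_pts V X" for S \<phi>
    using us Omega_bar_closed[OF _ that] by auto
  fix S \<phi>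
  {
    assume "\<not> (S \<in> V \<and> \<phi> \<in> X \<rightarrow>\<^sub>E car S)"
    then show "apply_op V X n w us S \<phi> = undefined" by (auto simp: apply_op_def dom_pts_def)
  next
    assume S: "S \<in> V" "\<phi> \<in> X \<rightarrow>\<^sub>E car S"
    then have "(S, \<phi>) \<in> dom_pts V X" by (simp add: dom_pts_def)
    moreover have "S \<in> Sall" using S V by blast
    ultimately show "apply_op V X n w us S \<phi> \<in> car S"
      using impl_op_closed[OF w _ args] by (simp add: apply_op_def)
  next
    fix T h assume h: "S \<in> V" "T \<in> V" "shom S T h" "\<phi> \<in> X \<rightarrow>\<^sub>E car S"
    have Sd: "(S, \<phi>) \<in> dom_pts V X" and Td: "(T, restrict (h \<circ> \<phi>) X) \<in> dom_pts V X"
      using h shom_restrict_PiE[OF h(3,4)] by (simp_all add: dom_pts_def)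
    have "h (us i S \<phi>) = us i T (restrict (h \<circ> \<phi>) X)" if "i < n" for i
      using us[OF that] h unfolding Omega_bar_def by (blast intro: impl_op_hom)
    then have "restrict (h \<circ> (\<lambda>i\<in>{..<n}. us i S \<phi>)) {..<n}
        = (\<lambda>i\<in>{..<n}. us i T (restrict (h \<circ> \<phi>) X))"
      by (intro restrict_ext) simp
    moreover have "S \<in> Sall" "T \<in> Sall" using h V by blast+
    ultimately have "h (w S (\<lambda>i\<in>{..<n}. us i S \<phi>)) = w T (\<lambda>i\<in>{..<n}. us i T (restrict (h \<circ> \<phi>) X))"
      using impl_op_hom[OF w _ _ h(3) args[OF Sd]] by simp
    then show "h (apply_op V X n w us S \<phi>) = apply_op V X n w us T (restrict (h \<circ> \<phi>) X)"
      using Sd Td by (simp add: apply_op_def)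
  }
qed

lemma implicit_signature_impl_op: "implicit_signature \<sigma> \<Longrightarrow> (n, w) \<in> \<sigma> \<Longrightarrow> impl_op Sall {..<n} w"
  unfolding implicit_signature_def by auto

lemma Omega_sig_subset_Omega_bar:
  assumes "V \<subseteq> Sall" "implicit_signature \<sigma>"
  shows "Omega_sig \<sigma> V X \<subseteq> Omega_bar V X"
proof
  fix u assume "u \<in> Omega_sig \<sigma> V X"
  then show "u \<in> Omega_bar V X"
    unfolding Omega_sig_def
  proof induction
    case (op n w us)
    then show ?case
      by (intro apply_op_in_Omega_bar assms(1) implicit_signature_impl_op[OF assms(2)]) auto
  qed (auto intro: gen_in_Omega_bar)
qed

lemma gen_in_Omega_sig: "x \<in> X \<Longrightarrow> gen V X x \<in> Omega_sig \<sigma> V X"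
  unfolding Omega_sig_def by (auto intro: sig_gen.base)

lemma emult_eq_apply_op_mult_op:
  assumes "V \<subseteq> Sall" "u \<in> Omega_bar V X" "v \<in> Omega_bar V X"
  shows "emult V X u v = apply_op V X 2 mult_op (\<lambda>i. if i = 0 then u else v)"
proof (intro ext)
  fix S \<phi>
  show "emult V X u v S \<phi> = apply_op V X 2 mult_op (\<lambda>i. if i = 0 then u else v) S \<phi>"
  proof (cases "(S, \<phi>) \<in> dom_pts V X")
    case True
    then have "S \<in> Sall" using assms(1) by (auto simp: dom_pts_def)
    moreover have "u S \<phi> \<in> car S" "v S \<phi> \<in> car S"
      using Omega_bar_closed[OF assms(2) True] Omega_bar_closed[OF assms(3) True] .
    ultimately show ?thesis using True by (auto simp: emult_def apply_op_def mult_op_def)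
  qed (simp add: emult_def apply_op_def)
qed

lemma Omega_sig_emult_closed:
  assumes "V \<subseteq> Sall" "implicit_signature \<sigma>" "u \<in> Omega_sig \<sigma> V X" "v \<in> Omega_sig \<sigma> V X"
  shows "emult V X u v \<in> Omega_sig \<sigma> V X"
proof -
  have "u \<in> Omega_bar V X" "v \<in> Omega_bar V X"
    using assms Omega_sig_subset_Omega_bar by blast+
  then have "emult V X u v = apply_op V X 2 mult_op (\<lambda>i. if i = 0 then u else v)"
    using assms(1) emult_eq_apply_op_mult_op by blast
  moreover have "(2, mult_op) \<in> \<sigma>" using assms(2) by (simp add: implicit_signature_def)
  ultimately show ?thesis
    using assms(3,4) unfolding Omega_sig_def by (auto intro: sig_gen.op)
qed

section \<open>The projection onto a pseudovariety\<close>

lemma pV_in_Omega_bar: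
  assumes V: "V \<subseteq> Sall" and u: "u \<in> Omega_bar Sall X"
  shows "pV V u \<in> Omega_bar V X"
  unfolding Omega_bar_def
proof (intro CollectI impl_opI)
  have u: "impl_op Sall X u" using u by (simp add: Omega_bar_def)
  fix S \<phi>
  {
    assume "\<not> (S \<in> V \<and> \<phi> \<in> X \<rightarrow>\<^sub>E car S)"
    then show "pV V u S \<phi> = undefined"
      by (cases "S \<in> V") (simp_all add: pV_def impl_op_undefined[OF u])
  next
    assume "S \<in> V" "\<phi> \<in> X \<rightarrow>\<^sub>E car S"
    then show "pV V u S \<phi> \<in> car S" using V by (simp add: pV_def impl_op_closed[OF u] subsetD)
  next
    fix T h assume "S \<in> V" "T \<in> V" "shom S T h" "\<phi> \<in> X \<rightarrow>\<^sub>E car S"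
    then show "h (pV V u S \<phi>) = pV V u T (restrict (h \<circ> \<phi>) X)"
      using V by (simp add: pV_def impl_op_hom[OF u] subsetD)
  }
qed

lemma pV_gen: "V \<subseteq> Sall \<Longrightarrow> pV V (gen Sall X x) = gen V X x"
  unfolding pV_def gen_def dom_pts_def by (auto intro!: ext)

lemma pV_apply_op: "V \<subseteq> Sall \<Longrightarrow> pV V (apply_op Sall X n w us) = apply_op V X n w (\<lambda>i. pV V (us i))"
  unfolding pV_def apply_op_def dom_pts_def by (auto intro!: ext)

lemma pV_emult: "V \<subseteq> Sall \<Longrightarrow> pV V (emult Sall X u v) = emult V X (pV V u) (pV V v)"
  unfolding pV_def emult_def dom_pts_def by (auto intro!: ext)

lemma apply_op_cong:
  assumes "\<And>i. i < n \<Longrightarrow> us i = us' i"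
  shows "apply_op V X n w us = apply_op V X n w us'"
proof -
  have "(\<lambda>i\<in>{..<n}. us i S \<phi>) = (\<lambda>i\<in>{..<n}. us' i S \<phi>)" for S \<phi>
    using assms by (intro restrict_ext) simp
  then show ?thesis unfolding apply_op_def by (simp only:)
qed

lemma sig_gen_mono:
  assumes "G \<subseteq> H"
  shows "sig_gen V X \<sigma> G \<subseteq> sig_gen V X \<sigma> H"
proof
  fix u assume "u \<in> sig_gen V X \<sigma> G"
  then show "u \<in> sig_gen V X \<sigma> H"
    by induction (use assms in \<open>auto intro: sig_gen.intros\<close>)
qed

lemma pV_image_sig_gen:
  assumes V: "V \<subseteq> Sall"
  shows "pV V ` sig_gen Sall X \<sigma> G = sig_gen V X \<sigma> (pV V ` G)"
proof
  show "pV V ` sig_gen Sall X \<sigma> G \<subseteq> sig_gen V X \<sigma> (pV V ` G)"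
  proof clarify
    fix u assume "u \<in> sig_gen Sall X \<sigma> G"
    then show "pV V u \<in> sig_gen V X \<sigma> (pV V ` G)"
    proof induction
      case (op n w us)
      then show ?case unfolding pV_apply_op[OF V] by (blast intro: sig_gen.op)
    qed (blast intro: sig_gen.base)
  qed
next
  show "sig_gen V X \<sigma> (pV V ` G) \<subseteq> pV V ` sig_gen Sall X \<sigma> G"
  proof
    fix u assume "u \<in> sig_gen V X \<sigma> (pV V ` G)"
    then show "u \<in> pV V ` sig_gen Sall X \<sigma> G"
    proof induction
      case (op n w us)
      then have "\<forall>i. \<exists>u'. i < n \<longrightarrow> u' \<in> sig_gen Sall X \<sigma> G \<and> us i = pV V u'"
        by blast
      then obtain us' where us': "\<And>i. i < n \<Longrightarrow> us' i \<in> sig_gen Sall X \<sigma> G \<and> us i = pV V (us' i)"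
        by metis
      then have "apply_op V X n w us = apply_op V X n w (\<lambda>i. pV V (us' i))"
        by (intro apply_op_cong) simp
      also have "\<dots> = pV V (apply_op Sall X n w us')"
        by (simp add: pV_apply_op[OF V])
      finally have "apply_op V X n w us = pV V (apply_op Sall X n w us')" .
      moreover have "apply_op Sall X n w us' \<in> sig_gen Sall X \<sigma> G"
        using op(1) us' by (auto intro: sig_gen.op)
      ultimately show ?case by blast
    qed (auto intro: sig_gen.base)
  qed
qed

lemma pV_image_Omega_sig: "V \<subseteq> Sall \<Longrightarrow> pV V ` Omega_sig \<sigma> Sall X = Omega_sig \<sigma> V X"
  unfolding Omega_sig_def by (simp add: pV_image_sig_gen image_image pV_gen)

lemma pcl_altdef: "pcl V X L = {w \<in> Omega_bar V X. \<forall>F. finite F \<and> F \<subseteq> dom_pts V X \<longrightarrow>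
    (\<exists>u\<in>L. \<forall>q\<in>F. u (fst q) (snd q) = w (fst q) (snd q))}"
  unfolding pcl_def by (simp add: case_prod_beta)

lemma pclI:
  "w \<in> Omega_bar V X \<Longrightarrow> (\<And>F. finite F \<Longrightarrow> F \<subseteq> dom_pts V X \<Longrightarrow>
     \<exists>u\<in>L. \<forall>q\<in>F. u (fst q) (snd q) = w (fst q) (snd q)) \<Longrightarrow> w \<in> pcl V X L"
  unfolding pcl_altdef by blast

lemma pclD:
  "w \<in> pcl V X L \<Longrightarrow> finite F \<Longrightarrow> F \<subseteq> dom_pts V X \<Longrightarrow>
     \<exists>u\<in>L. \<forall>q\<in>F. u (fst q) (snd q) = w (fst q) (snd q)"
  unfolding pcl_altdef by blast

lemma pcl_subset_Omega_bar: "pcl V X L \<subseteq> Omega_bar V X"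
  unfolding pcl_def by blast

lemma pcl_mono: "A \<subseteq> B \<Longrightarrow> pcl V X A \<subseteq> pcl V X B"
  unfolding pcl_def by blast

lemma pcl_superset: "L \<subseteq> Omega_bar V X \<Longrightarrow> L \<subseteq> pcl V X L"
  unfolding pcl_def by blast

lemma pcl_Un: "pcl V X (A \<union> B) \<subseteq> pcl V X A \<union> pcl V X B"
proof
  fix w assume w: "w \<in> pcl V X (A \<union> B)"
  show "w \<in> pcl V X A \<union> pcl V X B"
  proof (rule ccontr)
    assume "w \<notin> pcl V X A \<union> pcl V X B"
    moreover have "w \<in> Omega_bar V X" using w pcl_subset_Omega_bar by blast
    ultimately obtain FA FB where
        FA: "finite FA" "FA \<subseteq> dom_pts V X" "\<not> (\<exists>u\<in>A. \<forall>q\<in>FA. u (fst q) (snd q) = w (fst q) (snd q))"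
      and FB: "finite FB" "FB \<subseteq> dom_pts V X" "\<not> (\<exists>u\<in>B. \<forall>q\<in>FB. u (fst q) (snd q) = w (fst q) (snd q))"
      using pclI[of w V X A] pclI[of w V X B] by blast
    then obtain u where "u \<in> A \<union> B" "\<forall>q\<in>FA \<union> FB. u (fst q) (snd q) = w (fst q) (snd q)"
      using pclD[OF w, of "FA \<union> FB"] by blast
    with FA(3) FB(3) show False by blast
  qed
qed

lemma pcl_finite:
  assumes K: "finite K" "K \<subseteq> Omega_bar V X"
  shows "pcl V X K = K"
proof
  show "pcl V X K \<subseteq> K"
  proof
    fix w assume w: "w \<in> pcl V X K"
    show "w \<in> K"
    proof (rule ccontr)
      assume "w \<notin> K"
      have "\<exists>q\<in>dom_pts V X. k (fst q) (snd q) \<noteq> w (fst q) (snd q)" if "k \<in> K" for k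
        using Omega_bar_eqI[of k V X w] that K(2) \<open>w \<notin> K\<close> w pcl_subset_Omega_bar by fastforce
      then obtain sep where sep: "\<And>k. k \<in> K \<Longrightarrow> sep k \<in> dom_pts V X \<and>
          k (fst (sep k)) (snd (sep k)) \<noteq> w (fst (sep k)) (snd (sep k))"
        by metis
      then obtain u where "u \<in> K" "\<forall>q\<in>sep ` K. u (fst q) (snd q) = w (fst q) (snd q)"
        using pclD[OF w, of "sep ` K"] K(1) by blast
      with sep show False by blast
    qed
  qed
qed (rule pcl_superset[OF K(2)])

lemma pcl_emult:
  assumes "u \<in> pcl V X A" "v \<in> pcl V X B" "emult V X u v \<in> Omega_bar V X"
  shows "emult V X u v \<in> pcl V X (setmul (emult V X) A B)"
proof (rule pclI[OF assms(3)])
  fix F assume F: "finite F" "F \<subseteq> dom_pts V X"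
  obtain u' where u': "u' \<in> A" "\<forall>q\<in>F. u' (fst q) (snd q) = u (fst q) (snd q)"
    using pclD[OF assms(1) F] by blast
  obtain v' where v': "v' \<in> B" "\<forall>q\<in>F. v' (fst q) (snd q) = v (fst q) (snd q)"
    using pclD[OF assms(2) F] by blast
  have "\<forall>q\<in>F. emult V X u' v' (fst q) (snd q) = emult V X u v (fst q) (snd q)"
    using u'(2) v'(2) by (simp add: emult_def)
  moreover have "emult V X u' v' \<in> setmul (emult V X) A B"
    using u'(1) v'(1) unfolding setmul_def by blast
  ultimately show "\<exists>z\<in>setmul (emult V X) A B. \<forall>q\<in>F. z (fst q) (snd q) = emult V X u v (fst q) (snd q)"
    by blast
qed

lemma dom_pts_mono: "V \<subseteq> W \<Longrightarrow> dom_pts V X \<subseteq> dom_pts W X"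
  unfolding dom_pts_def by auto

lemma pV_image_pcl:
  assumes V: "V \<subseteq> Sall"
  shows "pV V ` pcl Sall X L \<subseteq> pcl V X (pV V ` L)"
proof clarify
  fix w assume w: "w \<in> pcl Sall X L"
  show "pV V w \<in> pcl V X (pV V ` L)"
  proof (rule pclI)
    show "pV V w \<in> Omega_bar V X"
      using pV_in_Omega_bar[OF V] w pcl_subset_Omega_bar by blast
    fix F assume F: "finite F" "F \<subseteq> dom_pts V X"
    then obtain u where u: "u \<in> L" "\<forall>q\<in>F. u (fst q) (snd q) = w (fst q) (snd q)"
      using pclD[OF w, of F] dom_pts_mono[OF V] by blast
    have "\<forall>q\<in>F. pV V u (fst q) (snd q) = pV V w (fst q) (snd q)"
      using u(2) by (simp add: pV_def)
    with u(1) show "\<exists>u\<in>pV V ` L. \<forall>q\<in>F. u (fst q) (snd q) = pV V w (fst q) (snd q)"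
      by blast
  qed
qed

lemma scl_mono: "A \<subseteq> B \<Longrightarrow> scl \<sigma> V X A \<subseteq> scl \<sigma> V X B"
  unfolding scl_def using pcl_mono by blast

lemma scl_Un: "scl \<sigma> V X (A \<union> B) \<subseteq> scl \<sigma> V X A \<union> scl \<sigma> V X B"
  unfolding scl_def using pcl_Un by blast

lemma pV_image_scl:
  assumes "V \<subseteq> Sall"
  shows "pV V ` scl \<sigma> Sall X L \<subseteq> scl \<sigma> V X (pV V ` L)"
proof -
  have "pV V ` scl \<sigma> Sall X L \<subseteq> pV V ` pcl Sall X L \<inter> pV V ` Omega_sig \<sigma> Sall X"
    unfolding scl_def by blast
  then show ?thesis
    unfolding scl_def pV_image_Omega_sig[OF assms] using pV_image_pcl[OF assms] by blast
qed

section \<open>Closures of subsemigroups are closed under implicit operations\<close>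

lemma splus_subset:
  assumes "K \<subseteq> D" "\<forall>a\<in>D. \<forall>b\<in>D. m a b \<in> D"
  shows "splus m K \<subseteq> D"
proof
  fix x assume "x \<in> splus m K"
  then show "x \<in> D" by induction (use assms in auto)
qed

text \<open>A nullary implicit operation would pick compatible elements in the disjoint
  trivial semigroups on \<open>{0}\<close> and \<open>{1}\<close>, both of which embed into \<open>{0, 1}\<close>.\<close>

lemma no_nullary_impl_op: "\<not> impl_op Sall {..<0} w"
proof
  assume w: "impl_op Sall {..<0} w"
  define S0 :: sgr where "S0 = ({0}, \<lambda>a b. a)"
  define S1 :: sgr where "S1 = ({1}, \<lambda>a b. a)"
  define S2 :: sgr where "S2 = ({0, 1}, \<lambda>a b. a)"
  have in_Sall: "S0 \<in> Sall" "S1 \<in> Sall" "S2 \<in> Sall"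
    unfolding S0_def S1_def S2_def Sall_def by auto
  have incl: "shom S0 S2 id" "shom S1 S2 id"
    unfolding shom_def S0_def S1_def S2_def by auto
  define e :: "nat \<Rightarrow> nat" where "e = (\<lambda>_. undefined)"
  have e: "e \<in> {..<0} \<rightarrow>\<^sub>E car S" for S :: sgr
    unfolding e_def by auto
  have "restrict (id \<circ> e) {..<0} = e" unfolding e_def by auto
  then have "w S0 e = w S2 e" "w S1 e = w S2 e"
    using impl_op_hom[OF w in_Sall(1,3) incl(1) e] impl_op_hom[OF w in_Sall(2,3) incl(2) e] by simp_all
  moreover have "w S0 e \<in> car S0" "w S1 e \<in> car S1"
    using impl_op_closed[OF w in_Sall(1) e] impl_op_closed[OF w in_Sall(2) e] .
  ultimately show False unfolding S0_def S1_def by simp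
qed

text \<open>The subsemigroup generated by the arguments is itself a finite semigroup and its
  inclusion is a homomorphism, so the value of the operation cannot leave it.\<close>

lemma impl_op_in_splus:
  assumes P: "P \<in> Sall" and \<psi>: "\<psi> \<in> {..<n} \<rightarrow>\<^sub>E car P" and w: "impl_op Sall {..<n} w"
  shows "w P \<psi> \<in> splus (mul P) (\<psi> ` {..<n})"
proof -
  have "n \<noteq> 0" using w no_nullary_impl_op by (cases n) auto
  define T :: sgr where "T = (splus (mul P) (\<psi> ` {..<n}), mul P)"
  have sub: "car T \<subseteq> car P"
    unfolding T_def fst_conv by (rule splus_subset) (use \<psi> P Sall_mul_closed in auto)
  have T: "T \<in> Sall"
    unfolding Sall_def
  proof (intro CollectI conjI ballI)
    show "finite (car T)" using sub P finite_subset unfolding Sall_def by blast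
    have "\<psi> 0 \<in> car T" using \<open>n \<noteq> 0\<close> unfolding T_def by (auto intro: splus.base)
    then show "car T \<noteq> {}" by blast
    fix a b assume ab: "a \<in> car T" "b \<in> car T"
    then show "mul T a b \<in> car T" unfolding T_def by (auto intro: splus.step)
    fix c assume "c \<in> car T"
    with ab sub show "mul T (mul T a b) c = mul T a (mul T b c)"
      using Sall_mul_assoc[OF P] unfolding T_def by (simp add: subset_iff)
  qed
  have "shom T P id" using sub unfolding shom_def T_def by auto
  moreover have \<psi>T: "\<psi> \<in> {..<n} \<rightarrow>\<^sub>E car T" using \<psi> unfolding T_def by (auto intro: splus.base)
  moreover have "restrict (id \<circ> \<psi>) {..<n} = \<psi>" using \<psi> by (auto simp: PiE_def extensional_def)
  ultimately have "w T \<psi> = w P \<psi>" using impl_op_hom[OF w T P] by fastforce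
  then show ?thesis using impl_op_closed[OF w T \<psi>T] unfolding T_def by simp
qed

lemma Sall_isomorphic_copy:
  fixes T :: "'a set" and f :: "'a \<Rightarrow> 'a \<Rightarrow> 'a"
  assumes fin: "finite T" and ne: "T \<noteq> {}"
    and closed: "\<forall>a\<in>T. \<forall>b\<in>T. f a b \<in> T"
    and assoc: "\<forall>a\<in>T. \<forall>b\<in>T. \<forall>c\<in>T. f (f a b) c = f a (f b c)"
  obtains P enc where "P \<in> Sall" "bij_betw enc T (car P)"
    "\<And>a b. a \<in> T \<Longrightarrow> b \<in> T \<Longrightarrow> enc (f a b) = mul P (enc a) (enc b)"
proof -
  obtain enc :: "'a \<Rightarrow> nat" where "bij_betw enc T {0..<card T}"
    using ex_bij_betw_finite_nat[OF fin] by blast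
  then have inj: "inj_on enc T" by (rule bij_betw_imp_inj_on)
  define dec where "dec = inv_into T enc"
  have dec_enc [simp]: "a \<in> T \<Longrightarrow> dec (enc a) = a" for a
    unfolding dec_def using inj by simp
  have dec_in: "a \<in> enc ` T \<Longrightarrow> dec a \<in> T" for a
    unfolding dec_def by (rule inv_into_into)
  define P :: sgr where "P = (enc ` T, \<lambda>a b. enc (f (dec a) (dec b)))"
  have "P \<in> Sall"
    unfolding Sall_def
  proof (intro CollectI conjI ballI)
    show "finite (car P)" "car P \<noteq> {}" unfolding P_def using fin ne by simp_all
    fix a b assume ab: "a \<in> car P" "b \<in> car P"
    then show "mul P a b \<in> car P" unfolding P_def using closed dec_in by auto
    fix c assume "c \<in> car P"
    with ab show "mul P (mul P a b) c = mul P a (mul P b c)"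
      unfolding P_def using closed assoc dec_in by simp
  qed
  moreover have "bij_betw enc T (car P)" unfolding P_def using inj by (simp add: bij_betw_def)
  moreover have "enc (f a b) = mul P (enc a) (enc b)" if "a \<in> T" "b \<in> T" for a b
    unfolding P_def using that by simp
  ultimately show ?thesis using that by blast
qed

text \<open>The single point is the product of the semigroups involved, evaluated at the tuple
  of the assignments.\<close>

lemma finite_dom_pts_factor:
  assumes F: "finite F" "F \<subseteq> dom_pts Sall X"
  obtains P \<psi> where "(P, \<psi>) \<in> dom_pts Sall X"
    "\<And>q. q \<in> F \<Longrightarrow> \<exists>\<pi>. shom P (fst q) \<pi> \<and> restrict (\<pi> \<circ> \<psi>) X = snd q"
proof -
  have Fq: "fst q \<in> Sall" "snd q \<in> X \<rightarrow>\<^sub>E car (fst q)" if "q \<in> F" for q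
    using subsetD[OF F(2) that] by (simp_all add: dom_pts_def case_prod_beta)
  define T where "T = (\<Pi>\<^sub>E q\<in>F. car (fst q))"
  define pm where "pm = (\<lambda>t s. \<lambda>q\<in>F. mul (fst q) (t q) (s q))"
  have "finite T" unfolding T_def using F(1) Fq by (intro finite_PiE) (auto simp: Sall_def)
  moreover have "T \<noteq> {}" unfolding T_def using Fq by (auto simp: PiE_eq_empty_iff Sall_def)
  moreover have pm_closed: "\<forall>t\<in>T. \<forall>s\<in>T. pm t s \<in> T"
  proof (intro ballI)
    fix t s assume "t \<in> T" "s \<in> T"
    then have "mul (fst q) (t q) (s q) \<in> car (fst q)" if "q \<in> F" for q
      using Sall_mul_closed[OF Fq(1)[OF that]] that unfolding T_def PiE_iff by blast
    then show "pm t s \<in> T" unfolding pm_def T_def by auto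
  qed
  moreover have "\<forall>t\<in>T. \<forall>s\<in>T. \<forall>r\<in>T. pm (pm t s) r = pm t (pm s r)"
  proof (intro ballI)
    fix t s r assume "t \<in> T" "s \<in> T" "r \<in> T"
    then have "mul (fst q) (mul (fst q) (t q) (s q)) (r q) = mul (fst q) (t q) (mul (fst q) (s q) (r q))"
      if "q \<in> F" for q
      using Sall_mul_assoc[OF Fq(1)[OF that]] that unfolding T_def PiE_iff by blast
    then show "pm (pm t s) r = pm t (pm s r)" unfolding pm_def by (auto intro: restrict_ext)
  qed
  ultimately obtain P enc where P: "P \<in> Sall" "bij_betw enc T (car P)"
    and enc_hom: "\<And>t s. t \<in> T \<Longrightarrow> s \<in> T \<Longrightarrow> enc (pm t s) = mul P (enc t) (enc s)"
    by (rule Sall_isomorphic_copy) blast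
  define dec where "dec = inv_into T enc"
  have dec_in: "a \<in> car P \<Longrightarrow> dec a \<in> T" for a
    using P(2) unfolding dec_def by (metis bij_betw_imp_surj_on inv_into_into)
  have enc_dec: "a \<in> car P \<Longrightarrow> enc (dec a) = a" for a
    using P(2) unfolding dec_def by (metis bij_betw_imp_surj_on f_inv_into_f)
  have dec_enc: "t \<in> T \<Longrightarrow> dec (enc t) = t" for t
    using P(2) unfolding dec_def by (simp add: bij_betw_imp_inj_on)
  define \<psi> where "\<psi> = (\<lambda>x\<in>X. enc (\<lambda>q\<in>F. snd q x))"
  have tuple: "(\<lambda>q\<in>F. snd q x) \<in> T" if "x \<in> X" for x
    unfolding T_def by (rule PiE_I) (simp_all add: PiE_mem[OF Fq(2)] that)
  have "(P, \<psi>) \<in> dom_pts Sall X"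
    using P tuple bij_betwE unfolding dom_pts_def \<psi>_def by fastforce
  moreover have "\<exists>\<pi>. shom P (fst q) \<pi> \<and> restrict (\<pi> \<circ> \<psi>) X = snd q" if q: "q \<in> F" for q
  proof (intro exI conjI)
    show "shom P (fst q) (\<lambda>a. dec a q)"
      unfolding shom_def
    proof (intro conjI ballI)
      fix a assume "a \<in> car P"
      then show "dec a q \<in> car (fst q)" using dec_in q unfolding T_def by auto
    next
      fix a b assume "a \<in> car P" "b \<in> car P"
      then have "mul P a b = enc (pm (dec a) (dec b))" using enc_hom dec_in enc_dec by simp
      then show "dec (mul P a b) q = mul (fst q) (dec a q) (dec b q)"
        using \<open>a \<in> car P\<close> \<open>b \<in> car P\<close> dec_in dec_enc pm_closed q by (simp add: pm_def)
    qed
    show "restrict ((\<lambda>a. dec a q) \<circ> \<psi>) X = snd q"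
      using Fq(2)[OF q] q tuple dec_enc by (auto simp: \<psi>_def PiE_def extensional_def)
  qed
  ultimately show ?thesis using that by blast
qed

lemma Omega_bar_shom:
  assumes "u \<in> Omega_bar Sall X" "(P, \<psi>) \<in> dom_pts Sall X" "S \<in> Sall"
    and "shom P S \<pi>" "restrict (\<pi> \<circ> \<psi>) X = \<phi>"
  shows "u S \<phi> = \<pi> (u P \<psi>)"
  using assms impl_op_hom[of Sall X u P S \<pi> \<psi>] by (simp add: Omega_bar_def dom_pts_def)

lemma values_of_emult_closed:
  assumes "\<forall>a\<in>M. \<forall>b\<in>M. emult Sall X a b \<in> M" "(P, \<psi>) \<in> dom_pts Sall X" "N \<subseteq> M"
  shows "splus (mul P) ((\<lambda>u. u P \<psi>) ` N) \<subseteq> (\<lambda>u. u P \<psi>) ` M"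
proof (rule splus_subset)
  have "mul P (a P \<psi>) (b P \<psi>) = emult Sall X a b P \<psi>" for a b
    using assms(2) by (simp add: emult_def)
  then show "\<forall>a\<in>(\<lambda>u. u P \<psi>) ` M. \<forall>b\<in>(\<lambda>u. u P \<psi>) ` M. mul P a b \<in> (\<lambda>u. u P \<psi>) ` M"
    using assms(1) by auto
qed (use assms(3) in blast)

lemma apply_op_eq_via_shom:
  assumes w: "impl_op Sall {..<n} w" and P\<psi>0: "(P, \<psi>0) \<in> dom_pts Sall X"
    and S\<phi>: "(S, \<phi>) \<in> dom_pts Sall X"
    and \<pi>: "shom P S \<pi>" "restrict (\<pi> \<circ> \<psi>0) X = \<phi>"
    and u': "\<And>i. i < n \<Longrightarrow> u' i \<in> Omega_bar Sall X \<and> u' i S \<phi> = us i S \<phi>"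
    and v: "v \<in> Omega_bar Sall X" "v P \<psi>0 = w P (\<lambda>i\<in>{..<n}. u' i P \<psi>0)"
  shows "v S \<phi> = apply_op Sall X n w us S \<phi>"
proof -
  have P: "P \<in> Sall" and S: "S \<in> Sall" using P\<psi>0 S\<phi> by (simp_all add: dom_pts_def)
  have \<psi>: "(\<lambda>i\<in>{..<n}. u' i P \<psi>0) \<in> {..<n} \<rightarrow>\<^sub>E car P"
    using u' Omega_bar_closed[OF _ P\<psi>0] by simp
  have "restrict (\<pi> \<circ> (\<lambda>i\<in>{..<n}. u' i P \<psi>0)) {..<n} = (\<lambda>i\<in>{..<n}. us i S \<phi>)"
  proof (rule restrict_ext)
    fix i assume "i \<in> {..<n}"
    then have "i < n" by simp
    then have "u' i S \<phi> = \<pi> (u' i P \<psi>0)"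
      using u' Omega_bar_shom[OF _ P\<psi>0 S \<pi>] by blast
    with u' \<open>i < n\<close> show "(\<pi> \<circ> (\<lambda>i\<in>{..<n}. u' i P \<psi>0)) i = us i S \<phi>" by simp
  qed
  moreover have "v S \<phi> = \<pi> (w P (\<lambda>i\<in>{..<n}. u' i P \<psi>0))"
    unfolding v(2)[symmetric] using v(1) by (rule Omega_bar_shom[OF _ P\<psi>0 S \<pi>])
  ultimately show ?thesis
    using impl_op_hom[OF w P S \<pi>(1) \<psi>] S\<phi> by (simp add: apply_op_def)
qed

text \<open>Approximate the arguments at the product point \<open>(P, \<psi>0)\<close> of the given finitely many
  points; there the value of \<open>w\<close> lies in the subsemigroup generated by the approximants,
  so some element of \<open>M\<close> realises it, and the projections out of \<open>P\<close> transfer this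
  agreement to all the given points.\<close>

lemma apply_op_in_pcl_subsemigroup:
  assumes w: "impl_op Sall {..<n} w"
    and M: "M \<subseteq> Omega_bar Sall X" "\<forall>a\<in>M. \<forall>b\<in>M. emult Sall X a b \<in> M"
    and us: "\<And>i. i < n \<Longrightarrow> us i \<in> pcl Sall X M"
  shows "apply_op Sall X n w us \<in> pcl Sall X M"
proof (rule pclI)
  show "apply_op Sall X n w us \<in> Omega_bar Sall X"
    using us pcl_subset_Omega_bar by (intro apply_op_in_Omega_bar[OF order_refl w]) blast
  fix F assume F: "finite F" "F \<subseteq> dom_pts Sall X"
  obtain P \<psi>0 where P\<psi>0: "(P, \<psi>0) \<in> dom_pts Sall X"
    and factor: "\<And>q. q \<in> F \<Longrightarrow> \<exists>\<pi>. shom P (fst q) \<pi> \<and> restrict (\<pi> \<circ> \<psi>0) X = snd q"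
    using finite_dom_pts_factor[OF F] by blast
  have P: "P \<in> Sall" using P\<psi>0 by (simp add: dom_pts_def)
  have F': "finite (insert (P, \<psi>0) F)" "insert (P, \<psi>0) F \<subseteq> dom_pts Sall X"
    using F P\<psi>0 by auto
  have "\<forall>i. \<exists>u. i < n \<longrightarrow> u \<in> M \<and> (\<forall>q\<in>insert (P, \<psi>0) F. u (fst q) (snd q) = us i (fst q) (snd q))"
    using pclD[OF us F'] by blast
  then obtain u' where u': "\<And>i. i < n \<Longrightarrow> u' i \<in> M \<and>
      (\<forall>q\<in>insert (P, \<psi>0) F. u' i (fst q) (snd q) = us i (fst q) (snd q))"
    by (metis (no_types))
  have u'_car: "u' i P \<psi>0 \<in> car P" if "i < n" for i
    using Omega_bar_closed[OF _ P\<psi>0] u'[OF that] M(1) by blast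
  define \<psi> where "\<psi> = (\<lambda>i\<in>{..<n}. u' i P \<psi>0)"
  have \<psi>: "\<psi> \<in> {..<n} \<rightarrow>\<^sub>E car P"
    unfolding \<psi>_def using u'_car by simp
  have "w P \<psi> \<in> splus (mul P) (\<psi> ` {..<n})"
    by (rule impl_op_in_splus[OF P \<psi> w])
  also have "\<psi> ` {..<n} = (\<lambda>u. u P \<psi>0) ` u' ` {..<n}"
    unfolding \<psi>_def by (simp add: image_image)
  also have "splus (mul P) \<dots> \<subseteq> (\<lambda>u. u P \<psi>0) ` M"
    using u' by (intro values_of_emult_closed[OF M(2) P\<psi>0]) blast
  finally have "w P \<psi> \<in> (\<lambda>u. u P \<psi>0) ` M" .
  then obtain v where v: "v \<in> M" "v P \<psi>0 = w P \<psi>" unfolding image_iff by (metis (no_types))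
  have "v (fst q) (snd q) = apply_op Sall X n w us (fst q) (snd q)" if q: "q \<in> F" for q
  proof -
    obtain \<pi> where \<pi>: "shom P (fst q) \<pi>" "restrict (\<pi> \<circ> \<psi>0) X = snd q" using factor[OF q] by blast
    have "(fst q, snd q) \<in> dom_pts Sall X" using q F(2) by auto
    then show ?thesis
    proof (rule apply_op_eq_via_shom[OF w P\<psi>0 _ \<pi>])
      show "v \<in> Omega_bar Sall X" "v P \<psi>0 = w P (\<lambda>i\<in>{..<n}. u' i P \<psi>0)"
        using v M(1) unfolding \<psi>_def by auto
      show "u' i \<in> Omega_bar Sall X \<and> u' i (fst q) (snd q) = us i (fst q) (snd q)" if "i < n" for i
        using u'[OF that] M(1) q by auto
    qed
  qed
  with v(1) show "\<exists>u\<in>M. \<forall>q\<in>F. u (fst q) (snd q) = apply_op Sall X n w us (fst q) (snd q)"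
    by blast
qed

lemma sig_gen_scl_subset:
  assumes sig: "implicit_signature \<sigma>" and A: "A \<subseteq> Omega_sig \<sigma> Sall X"
  shows "sig_gen Sall X \<sigma> (scl \<sigma> Sall X A) \<subseteq> scl \<sigma> Sall X (splus (emult Sall X) A)"
proof
  define M where "M = splus (emult Sall X) A"
  have M_sig: "M \<subseteq> Omega_sig \<sigma> Sall X"
    unfolding M_def using A Omega_sig_emult_closed[OF order_refl sig] by (intro splus_subset) auto
  then have M_bar: "M \<subseteq> Omega_bar Sall X"
    using Omega_sig_subset_Omega_bar[OF order_refl sig] by blast
  have M_closed: "\<forall>a\<in>M. \<forall>b\<in>M. emult Sall X a b \<in> M"
    unfolding M_def by (auto intro: splus.step)
  fix u assume "u \<in> sig_gen Sall X \<sigma> (scl \<sigma> Sall X A)"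
  then show "u \<in> scl \<sigma> Sall X M"
  proof induction
    case (base u)
    have "A \<subseteq> M" unfolding M_def by (auto intro: splus.base)
    with base show ?case using scl_mono by blast
  next
    case (op n w us)
    then have "apply_op Sall X n w us \<in> Omega_sig \<sigma> Sall X"
      unfolding Omega_sig_def scl_def by (auto intro: sig_gen.op)
    moreover have "apply_op Sall X n w us \<in> pcl Sall X M"
      using op implicit_signature_impl_op[OF sig] unfolding scl_def
      by (intro apply_op_in_pcl_subsemigroup[OF _ M_bar M_closed]) auto
    ultimately show ?case unfolding scl_def by blast
  qed
qed

section \<open>Rational sets and words\<close>

lemma setmul_image:
  assumes "\<And>a b. a \<in> K \<Longrightarrow> b \<in> L \<Longrightarrow> f (m a b) = m' (f a) (f b)"
  shows "f ` setmul m K L = setmul m' (f ` K) (f ` L)"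
  using assms unfolding setmul_def by (auto simp: image_iff) metis

lemma splus_image:
  assumes K: "K \<subseteq> D" and D: "\<forall>a\<in>D. \<forall>b\<in>D. m a b \<in> D"
    and f: "\<And>a b. a \<in> D \<Longrightarrow> b \<in> D \<Longrightarrow> f (m a b) = m' (f a) (f b)"
  shows "f ` splus m K = splus m' (f ` K)"
proof
  have D': "splus m K \<subseteq> D" using splus_subset[OF K D] .
  show "f ` splus m K \<subseteq> splus m' (f ` K)"
  proof clarify
    fix x assume "x \<in> splus m K"
    then show "f x \<in> splus m' (f ` K)"
    proof induction
      case (step a b)
      then have "f (m a b) = m' (f a) (f b)" using D' f by blast
      with step show ?case by (simp add: splus.step)
    qed (auto intro: splus.base)
  qed
  show "splus m' (f ` K) \<subseteq> f ` splus m K"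
  proof
    fix y assume "y \<in> splus m' (f ` K)"
    then show "y \<in> f ` splus m K"
    proof induction
      case (step a b)
      then obtain x1 x2 where x: "x1 \<in> splus m K" "a = f x1" "x2 \<in> splus m K" "b = f x2"
        by blast
      then have "m' a b = f (m x1 x2)" using D' f by (simp add: subset_iff)
      moreover have "m x1 x2 \<in> splus m K" using x by (auto intro: splus.step)
      ultimately show ?case by blast
    qed (auto intro: splus.base)
  qed
qed

lemma rat_sets_subset:
  assumes "L \<in> rat_sets M m" "\<forall>a\<in>M. \<forall>b\<in>M. m a b \<in> M"
  shows "L \<subseteq> M"
  using assms(1)
proof induction
  case (prod K L)
  then show ?case using assms(2) unfolding setmul_def by blast
next
  case (plus K)
  then show ?case using splus_subset assms(2) by blast
qed auto

lemma pV_rat_sets: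
  assumes V: "V \<subseteq> Sall" and L: "L \<in> rat_sets (Omega_sig \<sigma> Sall X) (emult Sall X)"
  shows "pV V ` L \<in> rat_sets (Omega_sig \<sigma> V X) (emult V X)"
  using L
proof induction
  case (fin K)
  then have "pV V ` K \<subseteq> Omega_sig \<sigma> V X"
    using image_mono pV_image_Omega_sig[OF V] by metis
  with fin show ?case by (simp add: rat_sets.fin)
next
  case (un K L)
  then show ?case by (simp add: image_Un rat_sets.un)
next
  case (prod K L)
  have "pV V ` setmul (emult Sall X) K L = setmul (emult V X) (pV V ` K) (pV V ` L)"
    by (rule setmul_image) (rule pV_emult[OF V])
  with prod show ?case by (simp add: rat_sets.prod)
next
  case (plus K)
  have "pV V ` splus (emult Sall X) K = splus (emult V X) (pV V ` K)"
    by (rule splus_image[of K UNIV]) (simp_all add: pV_emult[OF V])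
  with plus show ?case by (simp add: rat_sets.plus)
qed

lemma emult_assoc:
  assumes V: "V \<subseteq> Sall" and "u \<in> Omega_bar V X" "v \<in> Omega_bar V X" "z \<in> Omega_bar V X"
  shows "emult V X (emult V X u v) z = emult V X u (emult V X v z)"
proof (intro ext)
  fix S \<phi>
  show "emult V X (emult V X u v) z S \<phi> = emult V X u (emult V X v z) S \<phi>"
  proof (cases "(S, \<phi>) \<in> dom_pts V X")
    case True
    then have "S \<in> Sall" using V by (auto simp: dom_pts_def)
    with True show ?thesis
      using Omega_bar_closed[OF assms(2) True] Omega_bar_closed[OF assms(3) True]
        Omega_bar_closed[OF assms(4) True] by (simp add: emult_def Sall_mul_assoc)
  qed (simp add: emult_def)
qed

lemma word_elt_in_Omega_sig:
  assumes sig: "implicit_signature \<sigma>"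
  shows "V \<subseteq> Sall \<Longrightarrow> xs \<noteq> [] \<Longrightarrow> set xs \<subseteq> X \<Longrightarrow> word_elt V X xs \<in> Omega_sig \<sigma> V X"
proof (induction V X xs rule: word_elt.induct)
  case (3 V X x y ys)
  then show ?case
    by (simp add: Omega_sig_emult_closed[OF _ sig] gen_in_Omega_sig)
qed (simp_all add: gen_in_Omega_sig)

lemma word_elt_append:
  assumes V: "V \<subseteq> Sall" and sig: "implicit_signature \<sigma>"
    and ys: "ys \<noteq> []" "set ys \<subseteq> X"
  shows "xs \<noteq> [] \<Longrightarrow> set xs \<subseteq> X \<Longrightarrow>
    word_elt V X (xs @ ys) = emult V X (word_elt V X xs) (word_elt V X ys)"
proof (induction xs)
  case (Cons x xs)
  have word_bar: "word_elt V X zs \<in> Omega_bar V X" if "zs \<noteq> []" "set zs \<subseteq> X" for zs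
    using word_elt_in_Omega_sig[OF sig V that] Omega_sig_subset_Omega_bar[OF V sig] by blast
  show ?case
  proof (cases xs)
    case Nil
    then show ?thesis using ys by (cases ys) simp_all
  next
    case (Cons y zs)
    then have "word_elt V X ((x # xs) @ ys)
        = emult V X (gen V X x) (emult V X (word_elt V X xs) (word_elt V X ys))"
      using Cons.IH Cons.prems ys by (cases ys) simp_all
    also have "\<dots> = emult V X (emult V X (gen V X x) (word_elt V X xs)) (word_elt V X ys)"
      using Cons Cons.prems ys
      by (intro emult_assoc[symmetric] V gen_in_Omega_bar word_bar) simp_all
    finally show ?thesis using Cons by simp
  qed
qed simp

section \<open>Lifting closures along the projection\<close>

definition closure_lifts :: "(nat \<times> elt) set \<Rightarrow> sgr set \<Rightarrow> nat set \<Rightarrow> elt set \<Rightarrow> bool" where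
  "closure_lifts \<sigma> V X A \<longleftrightarrow> scl \<sigma> V X (pV V ` A) \<subseteq> pV V ` scl \<sigma> Sall X A"

lemma closure_lifts_finite:
  assumes V: "V \<subseteq> Sall" and sig: "implicit_signature \<sigma>"
    and K: "finite K" "K \<subseteq> Omega_sig \<sigma> Sall X"
  shows "closure_lifts \<sigma> V X K"
proof -
  have K_bar: "K \<subseteq> Omega_bar Sall X"
    using K(2) Omega_sig_subset_Omega_bar[OF order_refl sig] by blast
  then have "pV V ` K \<subseteq> Omega_bar V X" using pV_in_Omega_bar[OF V] by blast
  then have "scl \<sigma> V X (pV V ` K) \<subseteq> pV V ` K"
    unfolding scl_def using pcl_finite K(1) by blast
  also have "\<dots> = pV V ` scl \<sigma> Sall X K"
    unfolding scl_def pcl_finite[OF K(1) K_bar] using K(2) by (simp add: Int_absorb2)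
  finally show ?thesis unfolding closure_lifts_def .
qed

lemma closure_lifts_Un:
  "closure_lifts \<sigma> V X A \<Longrightarrow> closure_lifts \<sigma> V X B \<Longrightarrow> closure_lifts \<sigma> V X (A \<union> B)"
  unfolding closure_lifts_def image_Un
  using scl_Un[of \<sigma> V X "pV V ` A" "pV V ` B"] scl_mono[of A "A \<union> B" \<sigma> Sall X]
    scl_mono[of B "A \<union> B" \<sigma> Sall X]
  by blast

lemma closure_lifts_setmul:
  assumes V: "V \<subseteq> Sall" and sig: "implicit_signature \<sigma>"
    and A: "closure_lifts \<sigma> V X A" and B: "closure_lifts \<sigma> V X B"
    and PR: "scl \<sigma> V X (setmul (emult V X) (pV V ` A) (pV V ` B))
             = setmul (emult V X) (scl \<sigma> V X (pV V ` A)) (scl \<sigma> V X (pV V ` B))"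
  shows "closure_lifts \<sigma> V X (setmul (emult Sall X) A B)"
  unfolding closure_lifts_def
proof
  fix y assume y: "y \<in> scl \<sigma> V X (pV V ` setmul (emult Sall X) A B)"
  have "pV V ` setmul (emult Sall X) A B = setmul (emult V X) (pV V ` A) (pV V ` B)"
    by (rule setmul_image) (rule pV_emult[OF V])
  with y PR obtain a b where ab: "y = emult V X a b"
      "a \<in> scl \<sigma> V X (pV V ` A)" "b \<in> scl \<sigma> V X (pV V ` B)"
    unfolding setmul_def by auto
  with A B obtain a' b' where a': "a' \<in> scl \<sigma> Sall X A" "a = pV V a'"
      and b': "b' \<in> scl \<sigma> Sall X B" "b = pV V b'"
    unfolding closure_lifts_def by blast
  have ab_sig: "emult Sall X a' b' \<in> Omega_sig \<sigma> Sall X"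
    using a'(1) b'(1) Omega_sig_emult_closed[OF order_refl sig] unfolding scl_def by blast
  then have "emult Sall X a' b' \<in> pcl Sall X (setmul (emult Sall X) A B)"
    using a'(1) b'(1) Omega_sig_subset_Omega_bar[OF order_refl sig]
    unfolding scl_def by (intro pcl_emult) auto
  with ab_sig have "emult Sall X a' b' \<in> scl \<sigma> Sall X (setmul (emult Sall X) A B)"
    unfolding scl_def by blast
  moreover have "y = pV V (emult Sall X a' b')"
    using ab(1) a'(2) b'(2) pV_emult[OF V] by simp
  ultimately show "y \<in> pV V ` scl \<sigma> Sall X (setmul (emult Sall X) A B)" by blast
qed

lemma closure_lifts_splus:
  assumes V: "V \<subseteq> Sall" and sig: "implicit_signature \<sigma>" and A_sig: "A \<subseteq> Omega_sig \<sigma> Sall X"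
    and A: "closure_lifts \<sigma> V X A"
    and PR: "scl \<sigma> V X (splus (emult V X) (pV V ` A)) = sig_gen V X \<sigma> (scl \<sigma> V X (pV V ` A))"
  shows "closure_lifts \<sigma> V X (splus (emult Sall X) A)"
proof -
  have "pV V ` splus (emult Sall X) A = splus (emult V X) (pV V ` A)"
    by (rule splus_image[of A UNIV]) (simp_all add: pV_emult[OF V])
  then have "scl \<sigma> V X (pV V ` splus (emult Sall X) A) = sig_gen V X \<sigma> (scl \<sigma> V X (pV V ` A))"
    using PR by simp
  also have "\<dots> \<subseteq> sig_gen V X \<sigma> (pV V ` scl \<sigma> Sall X A)"
    using A unfolding closure_lifts_def by (intro sig_gen_mono)
  also have "\<dots> = pV V ` sig_gen Sall X \<sigma> (scl \<sigma> Sall X A)"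
    by (rule pV_image_sig_gen[OF V, symmetric])
  also have "\<dots> \<subseteq> pV V ` scl \<sigma> Sall X (splus (emult Sall X) A)"
    using sig_gen_scl_subset[OF sig A_sig] by (rule image_mono)
  finally show ?thesis unfolding closure_lifts_def .
qed

lemma closure_lifts_rat_sets_image:
  assumes V: "V \<subseteq> Sall" and sig: "implicit_signature \<sigma>" and PR: "PR_class \<sigma> V X C"
    and D: "\<forall>a\<in>D. \<forall>b\<in>D. m a b \<in> D" and f_sig: "f ` D \<subseteq> Omega_sig \<sigma> Sall X"
    and f_hom: "\<And>a b. a \<in> D \<Longrightarrow> b \<in> D \<Longrightarrow> f (m a b) = emult Sall X (f a) (f b)"
    and C: "\<And>K. K \<in> rat_sets D m \<Longrightarrow> pV V ` f ` K \<in> C"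
    and L: "L \<in> rat_sets D m"
  shows "closure_lifts \<sigma> V X (f ` L)"
  using L
proof induction
  case (fin K)
  then show ?case using f_sig by (intro closure_lifts_finite[OF V sig]) auto
next
  case (un K L)
  then show ?case by (simp add: image_Un closure_lifts_Un)
next
  case (prod K L)
  then have "K \<subseteq> D" "L \<subseteq> D" using rat_sets_subset D by blast+
  then have "f ` setmul m K L = setmul (emult Sall X) (f ` K) (f ` L)"
    using f_hom by (intro setmul_image) blast
  moreover have "scl \<sigma> V X (setmul (emult V X) (pV V ` f ` K) (pV V ` f ` L))
      = setmul (emult V X) (scl \<sigma> V X (pV V ` f ` K)) (scl \<sigma> V X (pV V ` f ` L))"
    using PR C prod(1,2) unfolding PR_class_def by blast
  ultimately show ?case using prod(3,4) by (simp add: closure_lifts_setmul[OF V sig])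
next
  case (plus K)
  then have K: "K \<subseteq> D" using rat_sets_subset D by blast
  then have "f ` splus m K = splus (emult Sall X) (f ` K)"
    using D f_hom by (intro splus_image)
  moreover have "scl \<sigma> V X (splus (emult V X) (pV V ` f ` K))
      = sig_gen V X \<sigma> (scl \<sigma> V X (pV V ` f ` K))"
    using PR C plus(1) unfolding PR_class_def by blast
  moreover have "f ` K \<subseteq> Omega_sig \<sigma> Sall X" using K f_sig by blast
  ultimately show ?case using plus(2) by (simp add: closure_lifts_splus[OF V sig])
qed

lemma full_wrt_if_closure_lifts:
  assumes "V \<subseteq> Sall" "\<And>L. L \<in> C \<Longrightarrow> closure_lifts \<sigma> V X L"
  shows "full_wrt \<sigma> V X C"
  using assms pV_image_scl unfolding full_wrt_def closure_lifts_def by blast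

lemma sigma_full_if_sigma_PR:
  assumes V: "V \<subseteq> Sall" and sig: "implicit_signature \<sigma>" and PR: "sigma_PR \<sigma> V"
  shows "sigma_full \<sigma> V"
  unfolding sigma_full_def
proof (intro allI impI)
  fix X :: "nat set" assume "finite X"
  with PR have PR_X: "PR_class \<sigma> V X {pV V ` word_elt Sall X ` L | L. L \<in> rat_langs X}"
    by (simp add: sigma_PR_def)
  show "full_wrt \<sigma> V X {word_elt Sall X ` L | L. L \<in> rat_langs X}"
  proof (rule full_wrt_if_closure_lifts[OF V], clarify)
    fix L assume "L \<in> rat_langs X"
    then show "closure_lifts \<sigma> V X (word_elt Sall X ` L)"
      unfolding rat_langs_def
      by (rule closure_lifts_rat_sets_image[OF V sig PR_X, rotated -1])
        (auto simp: rat_langs_def word_elt_in_Omega_sig[OF sig] word_elt_append[OF order_refl sig])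
  qed
qed

lemma strongly_sigma_full_if_strongly_sigma_PR:
  assumes V: "V \<subseteq> Sall" and sig: "implicit_signature \<sigma>" and PR: "strongly_sigma_PR \<sigma> V"
  shows "strongly_sigma_full \<sigma> V"
  unfolding strongly_sigma_full_def
proof (intro allI impI)
  fix X :: "nat set" assume "finite X"
  with PR have PR_X: "PR_class \<sigma> V X (rat_sets (Omega_sig \<sigma> V X) (emult V X))"
    by (simp add: strongly_sigma_PR_def)
  show "full_wrt \<sigma> V X (rat_sets (Omega_sig \<sigma> Sall X) (emult Sall X))"
  proof (rule full_wrt_if_closure_lifts[OF V])
    fix L assume "L \<in> rat_sets (Omega_sig \<sigma> Sall X) (emult Sall X)"
    then have "closure_lifts \<sigma> V X (id ` L)"
      by (rule closure_lifts_rat_sets_image[OF V sig PR_X, rotated -1])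
        (auto simp: Omega_sig_emult_closed[OF order_refl sig] pV_rat_sets[OF V])
    then show "closure_lifts \<sigma> V X L" by simp
  qed
qed

theorem corollary4p2:
  assumes "implicit_signature \<sigma>" and "pseudovariety V"
  shows "(sigma_PR \<sigma> V \<longrightarrow> sigma_full \<sigma> V)
       \<and> (strongly_sigma_PR \<sigma> V \<longrightarrow> strongly_sigma_full \<sigma> V)"
  using pseudovariety_subset_Sall[OF assms(2)] assms(1)
  by (blast intro: sigma_full_if_sigma_PR strongly_sigma_full_if_strongly_sigma_PR)

end
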